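(* Fix a vocabulary $(Pred, Cons, Var)$ and a natural number $k$. The following formulas are valid with respect to the class of all $k$-sight models: (1) $\mathsf{D}^k z t \to K_z t$, for every variable $z\in\{x,y\}$ and every term $t$; (2) $(K_z\mathcal{T}\land P(t_1,t_2,\ldots,t_m))\to K_z P(t_1,t_2,\ldots,t_m)$, for every $z\in\{x,y\}$, every $m$-ary $P\in Pred$ and every set of terms $\mathcal{T}$ with $\{t_1,\ldots,t_m\}\subseteq \mathcal{T}$.
   Context: Vocabulary: $Pred$ is a set of predicate symbols with arities containing a binary symbol $R$; $Cons$ is a nonempty finite set of constants; $Var=\{x,y\}$. Terms are elements of $\mathsf{Term}=Cons\cup Var$. Formulas are built from atoms $P(t_1,\dots,t_m)$ and $t_1\equiv t_2$ ($t_i$ terms) using $\neg,\land$, the operators $K_z t$ ("$z$ knows the value of $t$"), $K_z\varphi$ and $[z]\varphi$ for $z\in Var$ (only the static part is needed here). For a set $\mathcal{T}$ of terms, $K_z\mathcal{T}:=\bigwedge_{t\in\mathcal{T}}K_zt$. The formulas $\mathsf{D}^n t_1t_2$ are defined by $\mathsf{D}^0t_1t_2:=t_1\equiv t_2$ and $\mathsf{D}^{n+1}t_1t_2:=\mathsf{D}^nt_1t_2\lor\bigvee_{t\in \mathsf{Term}}(\mathsf{D}^nt_1t\land(Rtt_2\lor Rt_2t))$. A model is $M=(\mathbf{D},\mathbf{I},\Sigma,\sim)$ where $\mathbf{D}$ is a nonempty finite set; $\mathbf{I}$ assigns to each $m$-ary $P$ a relation $\mathbf{I}(P)\subseteq\mathbf{D}^m$,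 with $\mathbf{R}:=\mathbf{I}(R)$ serial (every $s\in\mathbf{D}$ has some $t$ with $(s,t)\in\mathbf{R}$), and to each $c\in Cons$ an element $\mathbf{I}(c)\in\mathbf{D}$ such that every element of $\mathbf{D}$ is $\mathbf{I}(c)$ for some $c$; $\Sigma\subseteq\mathbf{D}^{Var}$ is a nonempty set of assignments (situations); $\sim_x,\sim_y$ are equivalence relations on $\Sigma$. For $s\in\mathbf{D}$ let $\mathbb{D}^0(s)=\{s\}$ and $\mathbb{D}^{m+1}(s)=\mathbb{D}^m(s)\cup\{t\in\mathbf{D}:\exists u\in\mathbb{D}^m(s),\ (u,t)\in\mathbf{R}\text{ or }(t,u)\in\mathbf{R}\}$. $M$ is a $k$-sight model if whenever $z\in Var$, $\sigma,\sigma'\in\Sigma$, $\sigma\sim_z\sigma'$, then $\sigma(z')=\sigma'(z')$ for every $z'\in Var$ with $\sigma(z')\in\mathbb{D}^k(\sigma(z))$. Semantics: $t^{(\mathbf{I},\sigma)}$ is $\mathbf{I}(t)$ for a constant and $\sigma(t)$ for a variable. $M,\sigma\models P(t_1,\dots,t_m)$ iff $(t_1^{(\mathbf{I},\sigma)},\dots,t_m^{(\mathbf{I},\sigma)})\in\mathbf{I}(P)$; $M,\sigma\models t_1\equiv t_2$ iff $t_1^{(\mathbf{I},\sigma)}=t_2^{(\mathbf{I},\sigma)}$; Boolean clauses as usual; $M,\sigma\models K_zt$ iff $t^{(\mathbf{I},\sigma)}=t^{(\mathbf{I},\sigma')}$ for all $\sigma'\in\Sigma$ with $\sigma'\sim_z\sigma$;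 $M,\sigma\models K_z\varphi$ iff $M,\sigma'\models\varphi$ for all $\sigma'\in\Sigma$ with $\sigma'\sim_z\sigma$. A formula is valid (w.r.t. $k$-sight models) if it is true at every situation of every $k$-sight model. *)

theory Defs
  imports Main
begin

datatype var = X | Y

datatype 'c trm = Cst 'c | Vr var

datatype ('p, 'c) fm =
    Atom 'p "'c trm list"
  | Eq "'c trm" "'c trm"
  | Neg "('p, 'c) fm"
  | Conj "('p, 'c) fm" "('p, 'c) fm"
  | Kv var "'c trm"
  | Kf var "('p, 'c) fm"

definition Or :: "('p,'c) fm \<Rightarrow> ('p,'c) fm \<Rightarrow> ('p,'c) fm" where
  "Or a b = Neg (Conj (Neg a) (Neg b))"

definition Imp :: "('p,'c) fm \<Rightarrow> ('p,'c) fm \<Rightarrow> ('p,'c) fm" where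
  "Imp a b = Neg (Conj a (Neg b))"

definition Top :: "('p,'c) fm" where "Top = Eq (Vr X) (Vr X)"
definition Bot :: "('p,'c) fm" where "Bot = Neg Top"

definition BigOr :: "('p,'c) fm list \<Rightarrow> ('p,'c) fm" where
  "BigOr xs = foldr Or xs Bot"
definition BigAnd :: "('p,'c) fm list \<Rightarrow> ('p,'c) fm" where
  "BigAnd xs = foldr Conj xs Top"

definition enum_terms :: "'c trm set \<Rightarrow> 'c trm list" where
  "enum_terms S = (SOME xs. set xs = S \<and> distinct xs)"

definition KT :: "var \<Rightarrow> 'c trm set \<Rightarrow> ('p,'c) fm" where
  "KT z T = BigAnd (map (Kv z) (enum_terms T))"

text \<open>D^n t1 t2 (R is the distinguished binary predicate symbol)\<close>
fun Dn :: "'p \<Rightarrow> nat \<Rightarrow> 'c trm \<Rightarrow> 'c trm \<Rightarrow> ('p,'c) fm" where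
  "Dn R 0 t1 t2 = Eq t1 t2"
| "Dn R (Suc n) t1 t2 = Or (Dn R n t1 t2)
     (BigOr (map (\<lambda>t. Conj (Dn R n t1 t) (Or (Atom R [t, t2]) (Atom R [t2, t])))
                 (enum_terms UNIV)))"

record ('p, 'c, 'd) model =
  dom :: "'d set"
  pint :: "'p \<Rightarrow> 'd list set"
  cint :: "'c \<Rightarrow> 'd"
  sits :: "(var \<Rightarrow> 'd) set"
  sim :: "var \<Rightarrow> ((var \<Rightarrow> 'd) \<times> (var \<Rightarrow> 'd)) set"

definition is_model :: "('p \<Rightarrow> nat) \<Rightarrow> 'p \<Rightarrow> ('p,'c,'d) model \<Rightarrow> bool" where
  "is_model arity R M \<longleftrightarrow>
     finite (dom M) \<and> dom M \<noteq> {} \<and>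
     (\<forall>P. pint M P \<subseteq> {ds. length ds = arity P \<and> set ds \<subseteq> dom M}) \<and>
     (\<forall>s\<in>dom M. \<exists>t. [s, t] \<in> pint M R) \<and>
     (\<forall>c. cint M c \<in> dom M) \<and>
     dom M \<subseteq> range (cint M) \<and>
     sits M \<noteq> {} \<and> (\<forall>\<sigma>\<in>sits M. \<forall>z. \<sigma> z \<in> dom M) \<and>
     (\<forall>z. equiv (sits M) (sim M z))"

fun Dset :: "'p \<Rightarrow> ('p,'c,'d) model \<Rightarrow> nat \<Rightarrow> 'd \<Rightarrow> 'd set" where
  "Dset R M 0 s = {s}"
| "Dset R M (Suc m) s = Dset R M m s \<union>
     {t \<in> dom M. \<exists>u \<in> Dset R M m s. [u, t] \<in> pint M R \<or> [t, u] \<in> pint M R}"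

definition ksight_model :: "('p \<Rightarrow> nat) \<Rightarrow> 'p \<Rightarrow> nat \<Rightarrow> ('p,'c,'d) model \<Rightarrow> bool" where
  "ksight_model arity R k M \<longleftrightarrow> is_model arity R M \<and>
     (\<forall>z \<sigma> \<sigma>'. \<sigma> \<in> sits M \<longrightarrow> \<sigma>' \<in> sits M \<longrightarrow> (\<sigma>, \<sigma>') \<in> sim M z \<longrightarrow>
        (\<forall>z'. \<sigma> z' \<in> Dset R M k (\<sigma> z) \<longrightarrow> \<sigma> z' = \<sigma>' z'))"

fun teval :: "('p,'c,'d) model \<Rightarrow> (var \<Rightarrow> 'd) \<Rightarrow> 'c trm \<Rightarrow> 'd" where
  "teval M \<sigma> (Cst c) = cint M c"
| "teval M \<sigma> (Vr v) = \<sigma> v"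

fun sat :: "('p,'c,'d) model \<Rightarrow> (var \<Rightarrow> 'd) \<Rightarrow> ('p,'c) fm \<Rightarrow> bool" where
  "sat M \<sigma> (Atom P ts) = (map (teval M \<sigma>) ts \<in> pint M P)"
| "sat M \<sigma> (Eq t1 t2) = (teval M \<sigma> t1 = teval M \<sigma> t2)"
| "sat M \<sigma> (Neg \<phi>) = (\<not> sat M \<sigma> \<phi>)"
| "sat M \<sigma> (Conj \<phi> \<psi>) = (sat M \<sigma> \<phi> \<and> sat M \<sigma> \<psi>)"
| "sat M \<sigma> (Kv z t) = (\<forall>\<sigma>'\<in>sits M. (\<sigma>', \<sigma>) \<in> sim M z \<longrightarrow> teval M \<sigma> t = teval M \<sigma>' t)"
| "sat M \<sigma> (Kf z \<phi>) = (\<forall>\<sigma>'\<in>sits M. (\<sigma>', \<sigma>) \<in> sim M z \<longrightarrow> sat M \<sigma>' \<phi>)"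

definition valid_ksight :: "('p \<Rightarrow> nat) \<Rightarrow> 'p \<Rightarrow> nat \<Rightarrow> 'd itself \<Rightarrow> ('p,'c) fm \<Rightarrow> bool" where
  "valid_ksight arity R k (_ :: 'd itself) \<phi> \<longleftrightarrow>
     (\<forall>M :: ('p,'c,'d) model. ksight_model arity R k M \<longrightarrow> (\<forall>\<sigma>\<in>sits M. sat M \<sigma> \<phi>))"

end

theory Submission
  imports Defs
begin

text \<open>\<open>\<D>\<^sup>n t\<^sub>1 t\<^sub>2\<close> holds exactly when the value of \<open>t\<^sub>2\<close> lies within \<open>R\<close>-distance \<open>n\<close>
  of the value of \<open>t\<^sub>1\<close>, so \<open>\<D>\<^sup>k z t\<close> places the value of \<open>t\<close> in \<open>\<bbbD>\<^sup>k(\<sigma> z)\<close>, which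
  the \<open>k\<close>-sight condition keeps fixed along \<open>\<sim>\<^sub>z\<close>; constants are rigid anyway.
  An atom only depends on the values of its arguments, so it is known as soon as they are.
  Neither the arity of \<open>R\<close> nor that of \<open>P\<close> plays a role.\<close>

lemma sat_Or [simp]: "sat M \<sigma> (Or \<phi> \<psi>) \<longleftrightarrow> sat M \<sigma> \<phi> \<or> sat M \<sigma> \<psi>"
  by (simp add: Or_def)

lemma sat_Imp [simp]: "sat M \<sigma> (Imp \<phi> \<psi>) \<longleftrightarrow> (sat M \<sigma> \<phi> \<longrightarrow> sat M \<sigma> \<psi>)"
  by (simp add: Imp_def)

lemma sat_BigOr [simp]: "sat M \<sigma> (BigOr \<phi>s) \<longleftrightarrow> (\<exists>\<phi>\<in>set \<phi>s. sat M \<sigma> \<phi>)"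
  by (induction \<phi>s) (auto simp: BigOr_def Bot_def Top_def)

lemma sat_BigAnd [simp]: "sat M \<sigma> (BigAnd \<phi>s) \<longleftrightarrow> (\<forall>\<phi>\<in>set \<phi>s. sat M \<sigma> \<phi>)"
  by (induction \<phi>s) (auto simp: BigAnd_def Top_def)

lemma set_enum_terms: "finite T \<Longrightarrow> set (enum_terms T) = T"
  unfolding enum_terms_def by (rule someI2_ex) (auto intro: finite_distinct_list)

instance var :: finite
proof
  have "(UNIV :: var set) = {X, Y}"
    using var.exhaust by blast
  then show "finite (UNIV :: var set)"
    by (metis finite.emptyI finite.insertI)
qed

instance trm :: (finite) finite
proof
  have "(UNIV :: 'a trm set) = range Cst \<union> range Vr"
    by (auto intro: trm.exhaust)
  then show "finite (UNIV :: 'a trm set)"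
    by (metis finite_UnI finite_UNIV finite_imageI)
qed

lemma sat_KT: "finite T \<Longrightarrow> sat M \<sigma> (KT z T) \<longleftrightarrow> (\<forall>t\<in>T. sat M \<sigma> (Kv z t))"
  by (simp add: KT_def set_enum_terms)

lemma teval_in_dom:
  assumes "is_model arity R M" and "\<sigma> \<in> sits M"
  shows "teval M \<sigma> t \<in> dom M"
  using assms by (cases t) (auto simp: is_model_def)

lemma teval_in_Dset_if_sat_Dn:
  fixes t\<^sub>1 t\<^sub>2 :: "'c::finite trm"
  assumes "is_model arity R M" and "\<sigma> \<in> sits M" and "sat M \<sigma> (Dn R n t\<^sub>1 t\<^sub>2)"
  shows "teval M \<sigma> t\<^sub>2 \<in> Dset R M n (teval M \<sigma> t\<^sub>1)"
  using assms(3)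
proof (induction n arbitrary: t\<^sub>2)
  case 0
  then show ?case by simp
next
  case (Suc n)
  consider "sat M \<sigma> (Dn R n t\<^sub>1 t\<^sub>2)"
    | t where "sat M \<sigma> (Dn R n t\<^sub>1 t)" "sat M \<sigma> (Or (Atom R [t, t\<^sub>2]) (Atom R [t\<^sub>2, t]))"
    using Suc.prems by (auto simp: set_enum_terms)
  then show ?case
  proof cases
    case 1
    then show ?thesis using Suc.IH by simp
  next
    case 2
    then show ?thesis
      using Suc.IH[of t] teval_in_dom[OF assms(1,2)] by auto
  qed
qed

lemma sat_Kv_if_in_Dset:
  assumes "ksight_model arity R k M" and "\<sigma> \<in> sits M"
    and "teval M \<sigma> t \<in> Dset R M k (\<sigma> z)"
  shows "sat M \<sigma> (Kv z t)"
proof (cases t)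
  case (Cst c)
  then show ?thesis by simp
next
  case (Vr z')
  have "\<sigma> z' = \<sigma>' z'" if "\<sigma>' \<in> sits M" and "(\<sigma>', \<sigma>) \<in> sim M z" for \<sigma>'
  proof -
    have "equiv (sits M) (sim M z)"
      using assms(1) by (simp add: ksight_model_def is_model_def)
    with \<open>(\<sigma>', \<sigma>) \<in> sim M z\<close> have "(\<sigma>, \<sigma>') \<in> sim M z"
      by (meson equivE symE)
    moreover have "\<sigma> z' \<in> Dset R M k (\<sigma> z)"
      using assms(3) Vr by simp
    ultimately show ?thesis
      using assms(1,2) that(1) unfolding ksight_model_def by blast
  qed
  with Vr show ?thesis by simp
qed

lemma sat_Kv_if_sat_Dn:
  fixes t :: "'c::finite trm"
  assumes "ksight_model arity R k M" and "\<sigma> \<in> sits M" and "sat M \<sigma> (Dn R k (Vr z) t)"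
  shows "sat M \<sigma> (Kv z t)"
proof (rule sat_Kv_if_in_Dset[OF assms(1,2)])
  have "is_model arity R M"
    using assms(1) by (simp add: ksight_model_def)
  from teval_in_Dset_if_sat_Dn[OF this assms(2,3)]
  show "teval M \<sigma> t \<in> Dset R M k (\<sigma> z)" by simp
qed

lemma sat_Kf_Atom_if_sat_Kv:
  assumes "\<forall>t\<in>set ts. sat M \<sigma> (Kv z t)" and "sat M \<sigma> (Atom P ts)"
  shows "sat M \<sigma> (Kf z (Atom P ts))"
proof -
  have "map (teval M \<sigma>') ts \<in> pint M P"
    if "\<sigma>' \<in> sits M" and "(\<sigma>', \<sigma>) \<in> sim M z" for \<sigma>'
  proof -
    have "map (teval M \<sigma>') ts = map (teval M \<sigma>) ts"
      using assms(1) that by (auto intro: map_cong)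
    with assms(2) show ?thesis by (metis sat.simps(1))
  qed
  then show ?thesis by simp
qed

theorem fact2:
  fixes arity :: "'p \<Rightarrow> nat" and R :: 'p and k :: nat
  assumes "arity R = 2"
  shows "(\<forall>(z::var) (t::('c::finite) trm).
            valid_ksight arity R k TYPE('d) (Imp (Dn R k (Vr z) t) (Kv z t)))
       \<and> (\<forall>(z::var) (P::'p) (ts::'c trm list) (T::'c trm set).
            length ts = arity P \<and> set ts \<subseteq> T \<longrightarrow>
            valid_ksight arity R k TYPE('d)
              (Imp (Conj (KT z T) (Atom P ts)) (Kf z (Atom P ts))))"
proof (intro conjI allI impI)
  fix z :: var and t :: "'c trm"
  show "valid_ksight arity R k TYPE('d) (Imp (Dn R k (Vr z) t) (Kv z t))"
    unfolding valid_ksight_def sat_Imp by (blast intro: sat_Kv_if_sat_Dn)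
next
  fix z :: var and P ts and T :: "'c trm set"
  assume "length ts = arity P \<and> set ts \<subseteq> T"
  then show "valid_ksight arity R k TYPE('d)
      (Imp (Conj (KT z T) (Atom P ts)) (Kf z (Atom P ts)))"
    unfolding valid_ksight_def sat_Imp sat.simps(4) sat_KT[OF finite]
    by (blast intro: sat_Kf_Atom_if_sat_Kv)
qed

end
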